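(* Assume $\mathcal T$ is contravariantly finite in $\mathcal A$ and let $f\in\mathcal A(X,Y)$. The following are equivalent: (1) $\overline f$ is a strong monomorphism in the left triangulated category $\underline{\mathcal A}$; (2) for every (equivalently, for some) $\mathcal T$-precover $p_Y:T_Y\to Y$, the projection $g:T\to X$ from the pullback $T$ of $f$ and $p_Y$ is a $\mathcal T$-precover of $X$; (3) for every (equivalently, for some) $\mathcal T$-precover $p_Y:T_Y\to Y$, the pullback object $T$ of $f$ and $p_Y$ belongs to $\mathcal T$.
   Context: $\mathcal A$ is an abelian category and $\mathcal T$ is a full additive subcategory of $\mathcal A$ closed under finite direct sums and direct summands. The stable category $\underline{\mathcal A}=\mathcal A/\langle\mathcal T\rangle$ has the same objects as $\mathcal A$ and morphisms modulo those factoring through an object of $\mathcal T$; $\overline f$ is the class of $f$. When $\mathcal T$ is contravariantly finite, $\underline{\mathcal A}$ carries the left triangulated structure: $\Omega Y=\ker(p_Y)$ for a $\mathcal T$-precover $p_Y:T_Y\to Y$; for $f:X\to Y$ one forms the pullback $Z$ of $f$ and $p_Y$ with projection $g:Z\to X$ and induced morphism $\Omega Y\to Z$; left triangles are the diagrams in $\underline{\mathcal A}$ isomorphic to $\Omega Y\to Z\xrightarrow{\overline g}X\xrightarrow{\overline f}Y$. A morphism $\overline f:X\to Y$ is a strong monomorphism if there is a left triangle $\Omega Y\to 0\to X\xrightarrow{\overline f}Y$. *)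

theory Defs
  imports Main
begin

text \<open>An (abstract) category with objects of type 'o and morphisms of type 'm.
  hom C X Y is the set of morphisms X to Y; cmp C g f is the composite g after f;
  madd / mneg / mzero give the additive (preadditive) structure of the hom-sets.\<close>

record ('o, 'm) acat =
  ob    :: "'o set"
  hom   :: "'o \<Rightarrow> 'o \<Rightarrow> 'm set"
  cmp   :: "'m \<Rightarrow> 'm \<Rightarrow> 'm"
  ident :: "'o \<Rightarrow> 'm"
  madd  :: "'m \<Rightarrow> 'm \<Rightarrow> 'm"
  mneg  :: "'m \<Rightarrow> 'm"
  mzero :: "'o \<Rightarrow> 'o \<Rightarrow> 'm"

definition msub :: "('o, 'm, 'z) acat_scheme \<Rightarrow> 'm \<Rightarrow> 'm \<Rightarrow> 'm" where
  "msub C f g = madd C f (mneg C g)"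

definition category :: "('o, 'm, 'z) acat_scheme \<Rightarrow> bool" where
  "category C \<longleftrightarrow>
     (\<forall>X Y. hom C X Y \<noteq> {} \<longrightarrow> X \<in> ob C \<and> Y \<in> ob C) \<and>
     (\<forall>X \<in> ob C. ident C X \<in> hom C X X) \<and>
     (\<forall>X Y Z f g. f \<in> hom C X Y \<longrightarrow> g \<in> hom C Y Z \<longrightarrow> cmp C g f \<in> hom C X Z) \<and>
     (\<forall>W X Y Z f g h. f \<in> hom C W X \<longrightarrow> g \<in> hom C X Y \<longrightarrow> h \<in> hom C Y Z \<longrightarrow>
        cmp C h (cmp C g f) = cmp C (cmp C h g) f) \<and>
     (\<forall>X Y f. f \<in> hom C X Y \<longrightarrow> cmp C (ident C Y) f = f \<and> cmp C f (ident C X) = f)"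

definition preadditive :: "('o, 'm, 'z) acat_scheme \<Rightarrow> bool" where
  "preadditive C \<longleftrightarrow> category C \<and>
     (\<forall>X \<in> ob C. \<forall>Y \<in> ob C.
        mzero C X Y \<in> hom C X Y \<and>
        (\<forall>f \<in> hom C X Y. \<forall>g \<in> hom C X Y. madd C f g \<in> hom C X Y) \<and>
        (\<forall>f \<in> hom C X Y. mneg C f \<in> hom C X Y) \<and>
        (\<forall>f \<in> hom C X Y. \<forall>g \<in> hom C X Y. \<forall>h \<in> hom C X Y.
            madd C (madd C f g) h = madd C f (madd C g h)) \<and>
        (\<forall>f \<in> hom C X Y. \<forall>g \<in> hom C X Y. madd C f g = madd C g f) \<and>
        (\<forall>f \<in> hom C X Y. madd C f (mzero C X Y) = f) \<and>
        (\<forall>f \<in> hom C X Y. madd C f (mneg C f) = mzero C X Y)) \<and>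
     (\<forall>X Y Z f f' g. f \<in> hom C X Y \<longrightarrow> f' \<in> hom C X Y \<longrightarrow> g \<in> hom C Y Z \<longrightarrow>
        cmp C g (madd C f f') = madd C (cmp C g f) (cmp C g f')) \<and>
     (\<forall>X Y Z f g g'. f \<in> hom C X Y \<longrightarrow> g \<in> hom C Y Z \<longrightarrow> g' \<in> hom C Y Z \<longrightarrow>
        cmp C (madd C g g') f = madd C (cmp C g f) (cmp C g' f))"

definition is_zero_obj :: "('o, 'm, 'z) acat_scheme \<Rightarrow> 'o \<Rightarrow> bool" where
  "is_zero_obj C Z \<longleftrightarrow> Z \<in> ob C \<and>
     (\<forall>X \<in> ob C. (\<exists>!f. f \<in> hom C Z X) \<and> (\<exists>!f. f \<in> hom C X Z))"

definition is_biproduct :: "('o, 'm, 'z) acat_scheme \<Rightarrow> 'o \<Rightarrow> 'o \<Rightarrow> 'o \<Rightarrow>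
    'm \<Rightarrow> 'm \<Rightarrow> 'm \<Rightarrow> 'm \<Rightarrow> bool" where
  "is_biproduct C X Y S i1 i2 p1 p2 \<longleftrightarrow>
     i1 \<in> hom C X S \<and> i2 \<in> hom C Y S \<and> p1 \<in> hom C S X \<and> p2 \<in> hom C S Y \<and>
     cmp C p1 i1 = ident C X \<and> cmp C p2 i2 = ident C Y \<and>
     cmp C p2 i1 = mzero C X Y \<and> cmp C p1 i2 = mzero C Y X \<and>
     madd C (cmp C i1 p1) (cmp C i2 p2) = ident C S"

definition additive :: "('o, 'm, 'z) acat_scheme \<Rightarrow> bool" where
  "additive C \<longleftrightarrow> preadditive C \<and> (\<exists>Z. is_zero_obj C Z) \<and>
     (\<forall>X \<in> ob C. \<forall>Y \<in> ob C. \<exists>S i1 i2 p1 p2. is_biproduct C X Y S i1 i2 p1 p2)"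

definition is_kernel :: "('o, 'm, 'z) acat_scheme \<Rightarrow> 'm \<Rightarrow> 'o \<Rightarrow> 'o \<Rightarrow> 'o \<Rightarrow> 'm \<Rightarrow> bool" where
  "is_kernel C f X Y K k \<longleftrightarrow> f \<in> hom C X Y \<and> k \<in> hom C K X \<and> cmp C f k = mzero C K Y \<and>
     (\<forall>W h. h \<in> hom C W X \<and> cmp C f h = mzero C W Y \<longrightarrow>
        (\<exists>!u. u \<in> hom C W K \<and> cmp C k u = h))"

definition is_cokernel :: "('o, 'm, 'z) acat_scheme \<Rightarrow> 'm \<Rightarrow> 'o \<Rightarrow> 'o \<Rightarrow> 'o \<Rightarrow> 'm \<Rightarrow> bool" where
  "is_cokernel C f X Y Q q \<longleftrightarrow> f \<in> hom C X Y \<and> q \<in> hom C Y Q \<and> cmp C q f = mzero C X Q \<and>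
     (\<forall>W h. h \<in> hom C Y W \<and> cmp C h f = mzero C X W \<longrightarrow>
        (\<exists>!u. u \<in> hom C Q W \<and> cmp C u q = h))"

definition is_mono :: "('o, 'm, 'z) acat_scheme \<Rightarrow> 'm \<Rightarrow> 'o \<Rightarrow> 'o \<Rightarrow> bool" where
  "is_mono C f X Y \<longleftrightarrow> f \<in> hom C X Y \<and>
     (\<forall>W g h. g \<in> hom C W X \<longrightarrow> h \<in> hom C W X \<longrightarrow> cmp C f g = cmp C f h \<longrightarrow> g = h)"

definition is_epi :: "('o, 'm, 'z) acat_scheme \<Rightarrow> 'm \<Rightarrow> 'o \<Rightarrow> 'o \<Rightarrow> bool" where
  "is_epi C f X Y \<longleftrightarrow> f \<in> hom C X Y \<and>
     (\<forall>W g h. g \<in> hom C Y W \<longrightarrow> h \<in> hom C Y W \<longrightarrow> cmp C g f = cmp C h f \<longrightarrow> g = h)"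

definition abelian :: "('o, 'm, 'z) acat_scheme \<Rightarrow> bool" where
  "abelian C \<longleftrightarrow> additive C \<and>
     (\<forall>X Y f. f \<in> hom C X Y \<longrightarrow> (\<exists>K k. is_kernel C f X Y K k) \<and> (\<exists>Q q. is_cokernel C f X Y Q q)) \<and>
     (\<forall>X Y f. is_mono C f X Y \<longrightarrow> (\<exists>Z g. is_kernel C g Y Z X f)) \<and>
     (\<forall>X Y f. is_epi C f X Y \<longrightarrow> (\<exists>Z g. is_cokernel C g Z X Y f))"

text \<open>A full additive subcategory, given by its class of objects T, closed under finite
  direct sums (contains a zero object, closed under binary direct sums) and direct summands.\<close>
definition additive_subcat :: "('o, 'm, 'z) acat_scheme \<Rightarrow> 'o set \<Rightarrow> bool" where
  "additive_subcat C T \<longleftrightarrow> T \<subseteq> ob C \<and> (\<exists>Z \<in> T. is_zero_obj C Z) \<and>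
     (\<forall>X \<in> T. \<forall>Y \<in> T. \<forall>S i1 i2 p1 p2. is_biproduct C X Y S i1 i2 p1 p2 \<longrightarrow> S \<in> T) \<and>
     (\<forall>S \<in> T. \<forall>X Y i1 i2 p1 p2. is_biproduct C X Y S i1 i2 p1 p2 \<longrightarrow> X \<in> T)"

definition precover :: "('o, 'm, 'z) acat_scheme \<Rightarrow> 'o set \<Rightarrow> 'm \<Rightarrow> 'o \<Rightarrow> 'o \<Rightarrow> bool" where
  "precover C T p P Y \<longleftrightarrow> P \<in> T \<and> p \<in> hom C P Y \<and>
     (\<forall>T' h. T' \<in> T \<and> h \<in> hom C T' Y \<longrightarrow> (\<exists>u. u \<in> hom C T' P \<and> cmp C p u = h))"

definition contravariantly_finite :: "('o, 'm, 'z) acat_scheme \<Rightarrow> 'o set \<Rightarrow> bool" where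
  "contravariantly_finite C T \<longleftrightarrow> (\<forall>Y \<in> ob C. \<exists>P p. precover C T p P Y)"

definition factors_through :: "('o, 'm, 'z) acat_scheme \<Rightarrow> 'o set \<Rightarrow> 'm \<Rightarrow> 'o \<Rightarrow> 'o \<Rightarrow> bool" where
  "factors_through C T f X Y \<longleftrightarrow>
     (\<exists>P a b. P \<in> T \<and> a \<in> hom C X P \<and> b \<in> hom C P Y \<and> f = cmp C b a)"

text \<open>Equality of morphisms X \<rightarrow> Y in the stable category A / <T>.\<close>
definition st_eq :: "('o, 'm, 'z) acat_scheme \<Rightarrow> 'o set \<Rightarrow> 'o \<Rightarrow> 'o \<Rightarrow> 'm \<Rightarrow> 'm \<Rightarrow> bool" where
  "st_eq C T X Y f g \<longleftrightarrow> f \<in> hom C X Y \<and> g \<in> hom C X Y \<and> factors_through C T (msub C f g) X Y"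

definition st_iso :: "('o, 'm, 'z) acat_scheme \<Rightarrow> 'o set \<Rightarrow> 'o \<Rightarrow> 'o \<Rightarrow> 'm \<Rightarrow> bool" where
  "st_iso C T X Y \<phi> \<longleftrightarrow> \<phi> \<in> hom C X Y \<and>
     (\<exists>\<psi> \<in> hom C Y X. st_eq C T X X (cmp C \<psi> \<phi>) (ident C X) \<and> st_eq C T Y Y (cmp C \<phi> \<psi>) (ident C Y))"

definition is_pullback :: "('o, 'm, 'z) acat_scheme \<Rightarrow> 'm \<Rightarrow> 'o \<Rightarrow> 'o \<Rightarrow> 'm \<Rightarrow> 'o \<Rightarrow>
    'o \<Rightarrow> 'm \<Rightarrow> 'm \<Rightarrow> bool" where
  "is_pullback C f X Y p P P' g q \<longleftrightarrow>
     f \<in> hom C X Y \<and> p \<in> hom C P Y \<and> g \<in> hom C P' X \<and> q \<in> hom C P' P \<and>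
     cmp C f g = cmp C p q \<and>
     (\<forall>W a b. a \<in> hom C W X \<and> b \<in> hom C W P \<and> cmp C f a = cmp C p b \<longrightarrow>
        (\<exists>!u. u \<in> hom C W P' \<and> cmp C g u = a \<and> cmp C q u = b))"

text \<open>Standard left triangle Omega Y \<rightarrow> Z \<rightarrow> X \<rightarrow> Y attached to f : X \<rightarrow> Y
  (representatives in A of the stable morphisms u, g, f).\<close>
definition std_left_triangle :: "('o, 'm, 'z) acat_scheme \<Rightarrow> 'o set \<Rightarrow>
    'o \<Rightarrow> 'o \<Rightarrow> 'o \<Rightarrow> 'o \<Rightarrow> 'm \<Rightarrow> 'm \<Rightarrow> 'm \<Rightarrow> bool" where
  "std_left_triangle C T Om Z X Y u g f \<longleftrightarrow>
     (\<exists>TY p k q. precover C T p TY Y \<and> is_kernel C p TY Y Om k \<and>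
        is_pullback C f X Y p TY Z g q \<and>
        u \<in> hom C Om Z \<and> cmp C g u = mzero C Om X \<and> cmp C q u = k)"

definition st_diag_iso :: "('o, 'm, 'z) acat_scheme \<Rightarrow> 'o set \<Rightarrow>
    'o \<Rightarrow> 'o \<Rightarrow> 'o \<Rightarrow> 'o \<Rightarrow> 'm \<Rightarrow> 'm \<Rightarrow> 'm \<Rightarrow>
    'o \<Rightarrow> 'o \<Rightarrow> 'o \<Rightarrow> 'o \<Rightarrow> 'm \<Rightarrow> 'm \<Rightarrow> 'm \<Rightarrow> bool" where
  "st_diag_iso C T A1 A2 A3 A4 a1 a2 a3 B1 B2 B3 B4 b1 b2 b3 \<longleftrightarrow>
     a1 \<in> hom C A1 A2 \<and> a2 \<in> hom C A2 A3 \<and> a3 \<in> hom C A3 A4 \<and>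
     b1 \<in> hom C B1 B2 \<and> b2 \<in> hom C B2 B3 \<and> b3 \<in> hom C B3 B4 \<and>
     (\<exists>\<phi>1 \<phi>2 \<phi>3 \<phi>4. st_iso C T A1 B1 \<phi>1 \<and> st_iso C T A2 B2 \<phi>2 \<and>
        st_iso C T A3 B3 \<phi>3 \<and> st_iso C T A4 B4 \<phi>4 \<and>
        st_eq C T A1 B2 (cmp C \<phi>2 a1) (cmp C b1 \<phi>1) \<and>
        st_eq C T A2 B3 (cmp C \<phi>3 a2) (cmp C b2 \<phi>2) \<and>
        st_eq C T A3 B4 (cmp C \<phi>4 a3) (cmp C b3 \<phi>3))"

definition left_triangle :: "('o, 'm, 'z) acat_scheme \<Rightarrow> 'o set \<Rightarrow>
    'o \<Rightarrow> 'o \<Rightarrow> 'o \<Rightarrow> 'o \<Rightarrow> 'm \<Rightarrow> 'm \<Rightarrow> 'm \<Rightarrow> bool" where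
  "left_triangle C T A1 A2 A3 A4 a1 a2 a3 \<longleftrightarrow>
     (\<exists>B1 B2 B3 B4 b1 b2 b3. std_left_triangle C T B1 B2 B3 B4 b1 b2 b3 \<and>
        st_diag_iso C T A1 A2 A3 A4 a1 a2 a3 B1 B2 B3 B4 b1 b2 b3)"

definition strong_mono :: "('o, 'm, 'z) acat_scheme \<Rightarrow> 'o set \<Rightarrow> 'm \<Rightarrow> 'o \<Rightarrow> 'o \<Rightarrow> bool" where
  "strong_mono C T f X Y \<longleftrightarrow> f \<in> hom C X Y \<and>
     (\<exists>TY p Om k Z. precover C T p TY Y \<and> is_kernel C p TY Y Om k \<and> is_zero_obj C Z \<and>
        left_triangle C T Om Z X Y (mzero C Om Z) (mzero C Z X) f)"

end

theory Submission
  imports Defs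
begin

text \<open>Let \<open>P\<close> be the pullback of \<open>f\<close> along a \<open>T\<close>-precover \<open>p : T\<^sub>Y \<rightarrow> Y\<close>, with projection
  \<open>g : P \<rightarrow> X\<close> and kernel map \<open>u : \<Omega> Y \<rightarrow> P\<close>. If \<open>P \<in> T\<close>, then \<open>P\<close> is zero in the stable
  category, so the standard triangle \<open>\<Omega> Y \<rightarrow> P \<rightarrow> X \<rightarrow> Y\<close> is isomorphic to \<open>\<Omega> Y \<rightarrow> 0 \<rightarrow> X \<rightarrow> Y\<close>;
  and \<open>g\<close> is a precover, because maps from \<open>T\<close> into \<open>X\<close> lift along \<open>p\<close> and then into \<open>P\<close>.
  Conversely, a left triangle \<open>\<Omega> Y \<rightarrow> 0 \<rightarrow> X \<rightarrow> Y\<close> is stably isomorphic to a standard triangle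
  of some arrow stably isomorphic to \<open>f\<close>, whose middle term lies in \<open>T\<close>. Comparing the two
  pullbacks by maps in both directions shows that \<open>u\<close> and \<open>g\<close> factor through \<open>T\<close>. Then so does
  the identity of \<open>P\<close>, and \<open>P \<in> T\<close> because idempotents split in an abelian category and \<open>T\<close> is
  closed under direct summands.\<close>

section \<open>Preadditive categories\<close>

locale preadditive_category =
  fixes C :: "('o, 'm, 'z) acat_scheme"
  assumes preadditive: "preadditive C"
begin

lemma category: "category C"
  using preadditive unfolding preadditive_def by (rule conjunct1)

lemmas category_axioms = category[unfolded category_def]

lemma hom_obD:
  assumes "f \<in> hom C X Y" shows "X \<in> ob C" "Y \<in> ob C"
proof -
  have "hom C X Y \<noteq> {}" using assms by blast
  then show "X \<in> ob C" "Y \<in> ob C" using category_axioms[THEN conjunct1] by blast+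
qed

lemma ident_hom [intro]: "X \<in> ob C \<Longrightarrow> ident C X \<in> hom C X X"
  using category_axioms[THEN conjunct2, THEN conjunct1] by blast

lemma comp_hom [intro]: "f \<in> hom C X Y \<Longrightarrow> g \<in> hom C Y Z \<Longrightarrow> cmp C g f \<in> hom C X Z"
  using category_axioms[THEN conjunct2, THEN conjunct2, THEN conjunct1] by blast

lemma comp_assoc:
  "f \<in> hom C W X \<Longrightarrow> g \<in> hom C X Y \<Longrightarrow> h \<in> hom C Y Z \<Longrightarrow>
    cmp C h (cmp C g f) = cmp C (cmp C h g) f"
  using category_axioms[THEN conjunct2, THEN conjunct2, THEN conjunct2, THEN conjunct1] by blast

lemma comp_ident_left [simp]: "f \<in> hom C X Y \<Longrightarrow> cmp C (ident C Y) f = f"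
  using category_axioms[THEN conjunct2, THEN conjunct2, THEN conjunct2, THEN conjunct2] by blast

lemma comp_ident_right [simp]: "f \<in> hom C X Y \<Longrightarrow> cmp C f (ident C X) = f"
  using category_axioms[THEN conjunct2, THEN conjunct2, THEN conjunct2, THEN conjunct2] by blast

lemmas preadditive_axioms = preadditive[unfolded preadditive_def, THEN conjunct2]

lemmas hom_group_axioms = preadditive_axioms[THEN conjunct1, rule_format]

lemma zero_hom [intro]: "X \<in> ob C \<Longrightarrow> Y \<in> ob C \<Longrightarrow> mzero C X Y \<in> hom C X Y"
  using hom_group_axioms by blast

lemma add_hom [intro]:
  assumes "f \<in> hom C X Y" "g \<in> hom C X Y" shows "madd C f g \<in> hom C X Y"
  using hom_group_axioms[OF hom_obD[OF assms(1)]] assms by blast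

lemma neg_hom [intro]:
  assumes "f \<in> hom C X Y" shows "mneg C f \<in> hom C X Y"
  using hom_group_axioms[OF hom_obD[OF assms(1)]] assms by blast

lemma diff_hom [intro]: "f \<in> hom C X Y \<Longrightarrow> g \<in> hom C X Y \<Longrightarrow> msub C f g \<in> hom C X Y"
  unfolding msub_def by blast

lemma add_assoc:
  assumes "f \<in> hom C X Y" "g \<in> hom C X Y" "h \<in> hom C X Y"
  shows "madd C (madd C f g) h = madd C f (madd C g h)"
  using hom_group_axioms[OF hom_obD[OF assms(1)]] assms by blast

lemma add_commute:
  assumes "f \<in> hom C X Y" "g \<in> hom C X Y" shows "madd C f g = madd C g f"
  using hom_group_axioms[OF hom_obD[OF assms(1)]] assms by blast

lemma add_zero_right:
  assumes "f \<in> hom C X Y" shows "madd C f (mzero C X Y) = f"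
  using hom_group_axioms[OF hom_obD[OF assms(1)]] assms by blast

lemma add_neg_right:
  assumes "f \<in> hom C X Y" shows "madd C f (mneg C f) = mzero C X Y"
  using hom_group_axioms[OF hom_obD[OF assms(1)]] assms by blast

lemma comp_distrib_left:
  "f \<in> hom C X Y \<Longrightarrow> f' \<in> hom C X Y \<Longrightarrow> g \<in> hom C Y Z \<Longrightarrow>
    cmp C g (madd C f f') = madd C (cmp C g f) (cmp C g f')"
  using preadditive_axioms[THEN conjunct2, THEN conjunct1] by blast

lemma comp_distrib_right:
  "f \<in> hom C X Y \<Longrightarrow> g \<in> hom C Y Z \<Longrightarrow> g' \<in> hom C Y Z \<Longrightarrow>
    cmp C (madd C g g') f = madd C (cmp C g f) (cmp C g' f)"
  using preadditive_axioms[THEN conjunct2, THEN conjunct2] by blast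

lemma zero_hom_of: "f \<in> hom C X Y \<Longrightarrow> mzero C X Y \<in> hom C X Y"
  using hom_obD by blast

lemma add_zero_left: "f \<in> hom C X Y \<Longrightarrow> madd C (mzero C X Y) f = f"
  using add_commute[OF zero_hom_of] add_zero_right by metis

lemma add_neg_left: "f \<in> hom C X Y \<Longrightarrow> madd C (mneg C f) f = mzero C X Y"
  using add_commute[OF neg_hom] add_neg_right by metis

lemma add_left_cancel:
  assumes a: "a \<in> hom C X Y" and "b \<in> hom C X Y" "c \<in> hom C X Y" and "madd C a b = madd C a c"
  shows "b = c"
proof -
  have cancel: "madd C (mneg C a) (madd C a x) = x" if x: "x \<in> hom C X Y" for x
    using add_assoc[OF neg_hom[OF a] a x] add_neg_left[OF a] add_zero_left[OF x] by simp
  show ?thesis using cancel[of b] cancel[of c] assms by metis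
qed

lemma neg_unique:
  assumes "a \<in> hom C X Y" "b \<in> hom C X Y" "madd C a b = mzero C X Y" shows "b = mneg C a"
  using add_left_cancel[of a X Y b "mneg C a"] assms add_neg_right neg_hom by simp

lemma add_self_eq_zero:
  assumes "a \<in> hom C X Y" "madd C a a = a" shows "a = mzero C X Y"
  using add_left_cancel[of a X Y a "mzero C X Y"] assms add_zero_right zero_hom_of by simp

lemma comp_zero_right:
  assumes g: "g \<in> hom C Y Z" and W: "W \<in> ob C" shows "cmp C g (mzero C W Y) = mzero C W Z"
proof (rule add_self_eq_zero)
  have z: "mzero C W Y \<in> hom C W Y" using g W hom_obD by blast
  then show "cmp C g (mzero C W Y) \<in> hom C W Z" using g by blast
  show "madd C (cmp C g (mzero C W Y)) (cmp C g (mzero C W Y)) = cmp C g (mzero C W Y)"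
    using comp_distrib_left[OF z z g] add_zero_right[OF z] by simp
qed

lemma comp_zero_left:
  assumes f: "f \<in> hom C X Y" and Z: "Z \<in> ob C" shows "cmp C (mzero C Y Z) f = mzero C X Z"
proof (rule add_self_eq_zero)
  have z: "mzero C Y Z \<in> hom C Y Z" using f Z hom_obD by blast
  then show "cmp C (mzero C Y Z) f \<in> hom C X Z" using f by blast
  show "madd C (cmp C (mzero C Y Z) f) (cmp C (mzero C Y Z) f) = cmp C (mzero C Y Z) f"
    using comp_distrib_right[OF f z z] add_zero_right[OF z] by simp
qed

lemma comp_neg_right:
  assumes f: "f \<in> hom C X Y" and g: "g \<in> hom C Y Z"
  shows "cmp C g (mneg C f) = mneg C (cmp C g f)"
proof (rule neg_unique)
  have "madd C (cmp C g f) (cmp C g (mneg C f)) = cmp C g (madd C f (mneg C f))"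
    using comp_distrib_left[OF f neg_hom[OF f] g] by simp
  then show "madd C (cmp C g f) (cmp C g (mneg C f)) = mzero C X Z"
    using add_neg_right[OF f] comp_zero_right[OF g hom_obD(1)[OF f]] by simp
qed (use f g in blast)+

lemma comp_neg_left:
  assumes f: "f \<in> hom C X Y" and g: "g \<in> hom C Y Z"
  shows "cmp C (mneg C g) f = mneg C (cmp C g f)"
proof (rule neg_unique)
  have "madd C (cmp C g f) (cmp C (mneg C g) f) = cmp C (madd C g (mneg C g)) f"
    using comp_distrib_right[OF f g neg_hom[OF g]] by simp
  then show "madd C (cmp C g f) (cmp C (mneg C g) f) = mzero C X Z"
    using add_neg_right[OF g] comp_zero_left[OF f hom_obD(2)[OF g]] by simp
qed (use f g in blast)+

lemma comp_diff_right:
  assumes "f \<in> hom C X Y" "f' \<in> hom C X Y" "g \<in> hom C Y Z"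
  shows "cmp C g (msub C f f') = msub C (cmp C g f) (cmp C g f')"
  unfolding msub_def using comp_distrib_left[OF assms(1) neg_hom assms(3)] comp_neg_right assms
  by simp

lemma comp_diff_left:
  assumes "f \<in> hom C X Y" "g \<in> hom C Y Z" "g' \<in> hom C Y Z"
  shows "cmp C (msub C g g') f = msub C (cmp C g f) (cmp C g' f)"
  unfolding msub_def using comp_distrib_right[OF assms(1,2) neg_hom] comp_neg_left assms
  by simp

lemma diff_self: "f \<in> hom C X Y \<Longrightarrow> msub C f f = mzero C X Y"
  unfolding msub_def by (rule add_neg_right)

lemma diff_add_cancel:
  assumes "f \<in> hom C X Y" "g \<in> hom C X Y" shows "madd C (msub C f g) g = f"
  unfolding msub_def using add_assoc[OF assms(1) neg_hom assms(2)] add_neg_left add_zero_right assms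
  by simp

lemma diff_zero: "f \<in> hom C X Y \<Longrightarrow> msub C f (mzero C X Y) = f"
  using diff_add_cancel[OF _ zero_hom_of] add_zero_right[OF diff_hom[OF _ zero_hom_of]] by metis

lemma diff_eq_zeroD:
  "f \<in> hom C X Y \<Longrightarrow> g \<in> hom C X Y \<Longrightarrow> msub C f g = mzero C X Y \<Longrightarrow> f = g"
  using diff_add_cancel add_zero_left by metis

lemma diff_diff_cancel:
  assumes "f \<in> hom C X Y" "g \<in> hom C X Y" shows "msub C f (msub C f g) = g"
proof (rule add_left_cancel)
  show "madd C (msub C f g) (msub C f (msub C f g)) = madd C (msub C f g) g"
    using assms diff_add_cancel add_commute[OF diff_hom] diff_hom by metis
qed (use assms in blast)+

lemma diff_add_diff:
  assumes "f \<in> hom C X Y" "g \<in> hom C X Y" "h \<in> hom C X Y"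
  shows "madd C (msub C f g) (msub C g h) = msub C f h"
  unfolding msub_def
  using add_assoc[OF diff_hom[OF assms(1,2)] assms(2) neg_hom[OF assms(3)]] diff_add_cancel assms
  by (simp add: msub_def)

lemma neg_diff:
  assumes "f \<in> hom C X Y" "g \<in> hom C X Y" shows "mneg C (msub C f g) = msub C g f"
  using neg_unique[OF diff_hom[OF assms] diff_hom[OF assms(2,1)]] diff_add_diff[OF assms assms(1)]
    diff_self[OF assms(1)] by simp

lemma kernelD:
  assumes "is_kernel C f X Y K k"
  shows "k \<in> hom C K X" "f \<in> hom C X Y" "cmp C f k = mzero C K Y"
  using assms unfolding is_kernel_def by blast+

lemma kernel_lift:
  assumes "is_kernel C f X Y K k" "h \<in> hom C W X" "cmp C f h = mzero C W Y"
  obtains e where "e \<in> hom C W K" "cmp C k e = h"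
  using assms unfolding is_kernel_def by blast

lemma kernel_cancel:
  assumes K: "is_kernel C f X Y K k" and e: "e \<in> hom C W K" "e' \<in> hom C W K"
    and eq: "cmp C k e = cmp C k e'"
  shows "e = e'"
proof -
  note k = kernelD[OF K]
  have ke: "cmp C k e \<in> hom C W X" using k e by blast
  have "cmp C f (cmp C k e) = mzero C W Y"
    using comp_assoc[OF e(1) k(1,2)] k(3) comp_zero_left[OF e(1) hom_obD(2)[OF k(2)]] by simp
  moreover have "\<forall>W h. h \<in> hom C W X \<and> cmp C f h = mzero C W Y \<longrightarrow>
      (\<exists>!u. u \<in> hom C W K \<and> cmp C k u = h)"
    using K unfolding is_kernel_def by (elim conjE)
  ultimately have "\<exists>!u. u \<in> hom C W K \<and> cmp C k u = cmp C k e"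
    using ke by blast
  then show ?thesis using e eq by (metis (no_types, lifting))
qed

lemma pullbackD:
  assumes "is_pullback C f X Y p P P' g q"
  shows "f \<in> hom C X Y" "p \<in> hom C P Y" "g \<in> hom C P' X" "q \<in> hom C P' P"
    "cmp C f g = cmp C p q"
  using assms unfolding is_pullback_def by blast+

lemma pullback_lift:
  assumes "is_pullback C f X Y p P P' g q"
    and "a \<in> hom C W X" "b \<in> hom C W P" "cmp C f a = cmp C p b"
  obtains v where "v \<in> hom C W P'" "cmp C g v = a" "cmp C q v = b"
  using assms unfolding is_pullback_def by blast

lemma pullback_cancel:
  assumes PB: "is_pullback C f X Y p P P' g q" and v: "v \<in> hom C W P'" "v' \<in> hom C W P'"
    and eq: "cmp C g v = cmp C g v'" "cmp C q v = cmp C q v'"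
  shows "v = v'"
proof -
  note h = pullbackD[OF PB]
  have a: "cmp C g v \<in> hom C W X" "cmp C q v \<in> hom C W P" using h v by blast+
  have "cmp C f (cmp C g v) = cmp C p (cmp C q v)"
    using comp_assoc[OF v(1) h(3) h(1)] comp_assoc[OF v(1) h(4) h(2)] h(5) by simp
  moreover have "\<forall>W a b. a \<in> hom C W X \<and> b \<in> hom C W P \<and> cmp C f a = cmp C p b \<longrightarrow>
      (\<exists>!u. u \<in> hom C W P' \<and> cmp C g u = a \<and> cmp C q u = b)"
    using PB unfolding is_pullback_def by (elim conjE)
  ultimately have "\<exists>!u. u \<in> hom C W P' \<and> cmp C g u = cmp C g v \<and> cmp C q u = cmp C q v"
    using a by blast
  then show ?thesis using v eq by (metis (no_types, lifting))
qed

text \<open>Pulling back preserves kernels: \<open>u\<close> is a kernel of \<open>g\<close>.\<close>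

lemma pullback_kernel_lift:
  assumes PB: "is_pullback C f X Y p P P' g q" and K: "is_kernel C p P Y K k"
    and u: "u \<in> hom C K P'" "cmp C g u = mzero C K X" "cmp C q u = k"
    and m: "m \<in> hom C W P'" "cmp C g m = mzero C W X"
  obtains e where "e \<in> hom C W K" "m = cmp C u e"
proof -
  note h = pullbackD[OF PB]
  have "cmp C p (cmp C q m) = cmp C f (cmp C g m)"
    using comp_assoc[OF m(1) h(3) h(1)] comp_assoc[OF m(1) h(4) h(2)] h(5) by simp
  also have "\<dots> = mzero C W Y" using comp_zero_right[OF h(1) hom_obD(1)[OF m(1)]] m(2) by simp
  finally obtain e where e: "e \<in> hom C W K" "cmp C k e = cmp C q m"
    using kernel_lift[OF K comp_hom[OF m(1) h(4)]] by blast
  have "cmp C g (cmp C u e) = mzero C W X"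
    using comp_assoc[OF e(1) u(1) h(3)] u(2) comp_zero_left[OF e(1) hom_obD(2)[OF h(3)]] by simp
  moreover have "cmp C q (cmp C u e) = cmp C q m"
    using comp_assoc[OF e(1) u(1) h(4)] u(3) e(2) by simp
  ultimately have "cmp C u e = m"
    using pullback_cancel[OF PB comp_hom[OF e(1) u(1)] m(1)] m(2) by simp
  then show ?thesis using that e(1) by blast
qed

end

locale abelian_with_subcat = preadditive_category C for C :: "('o, 'm, 'z) acat_scheme" +
  fixes T :: "'o set"
  assumes abelian: "abelian C" and subcat: "additive_subcat C T"
begin

lemma biproduct_exists:
  assumes "X \<in> ob C" "Y \<in> ob C" obtains S i1 i2 p1 p2 where "is_biproduct C X Y S i1 i2 p1 p2"
  using abelian assms unfolding abelian_def additive_def by blast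

lemma kernel_exists:
  assumes "f \<in> hom C X Y" obtains K k where "is_kernel C f X Y K k"
  using abelian assms unfolding abelian_def by blast

lemma subcat_ob: "P \<in> T \<Longrightarrow> P \<in> ob C"
  using subcat unfolding additive_subcat_def by blast

lemma subcat_zero_obj: obtains Z where "Z \<in> T" "is_zero_obj C Z"
  using subcat unfolding additive_subcat_def by blast

lemma subcat_biproduct: "X \<in> T \<Longrightarrow> Y \<in> T \<Longrightarrow> is_biproduct C X Y S i1 i2 p1 p2 \<Longrightarrow> S \<in> T"
  using subcat unfolding additive_subcat_def by blast

lemma subcat_summand: "S \<in> T \<Longrightarrow> is_biproduct C X Y S i1 i2 p1 p2 \<Longrightarrow> X \<in> T"
  using subcat unfolding additive_subcat_def by blast

lemma biproduct_proj:
  assumes S: "is_biproduct C X Y S i1 i2 p1 p2" and a: "a \<in> hom C W X" and b: "b \<in> hom C W Y"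
  shows "cmp C p1 (madd C (cmp C i1 a) (cmp C i2 b)) = a"
    and "cmp C p2 (madd C (cmp C i1 a) (cmp C i2 b)) = b"
proof -
  have s: "i1 \<in> hom C X S" "i2 \<in> hom C Y S" "p1 \<in> hom C S X" "p2 \<in> hom C S Y"
    "cmp C p1 i1 = ident C X" "cmp C p2 i2 = ident C Y"
    "cmp C p2 i1 = mzero C X Y" "cmp C p1 i2 = mzero C Y X"
    using S unfolding is_biproduct_def by auto
  have "cmp C p1 (madd C (cmp C i1 a) (cmp C i2 b)) = madd C a (mzero C W X)"
    using comp_distrib_left[OF comp_hom[OF a s(1)] comp_hom[OF b s(2)] s(3)]
      comp_assoc[OF a s(1) s(3)] comp_assoc[OF b s(2) s(3)] s(5,8) a
      comp_zero_left[OF b hom_obD(2)[OF a]] by simp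
  then show "cmp C p1 (madd C (cmp C i1 a) (cmp C i2 b)) = a" using add_zero_right[OF a] by simp
  have "cmp C p2 (madd C (cmp C i1 a) (cmp C i2 b)) = madd C (mzero C W Y) b"
    using comp_distrib_left[OF comp_hom[OF a s(1)] comp_hom[OF b s(2)] s(4)]
      comp_assoc[OF a s(1) s(4)] comp_assoc[OF b s(2) s(4)] s(6,7) b
      comp_zero_left[OF a hom_obD(2)[OF b]] by simp
  then show "cmp C p2 (madd C (cmp C i1 a) (cmp C i2 b)) = b" using add_zero_left[OF b] by simp
qed

lemma biproduct_expand:
  assumes S: "is_biproduct C X Y S i1 i2 p1 p2" and c: "c \<in> hom C W S"
  shows "c = madd C (cmp C i1 (cmp C p1 c)) (cmp C i2 (cmp C p2 c))"
proof -
  have s: "i1 \<in> hom C X S" "i2 \<in> hom C Y S" "p1 \<in> hom C S X" "p2 \<in> hom C S Y"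
    "madd C (cmp C i1 p1) (cmp C i2 p2) = ident C S"
    using S unfolding is_biproduct_def by auto
  have "c = cmp C (madd C (cmp C i1 p1) (cmp C i2 p2)) c" using s(5) c by simp
  also have "\<dots> = madd C (cmp C i1 (cmp C p1 c)) (cmp C i2 (cmp C p2 c))"
    using comp_distrib_right[OF c comp_hom[OF s(3) s(1)] comp_hom[OF s(4) s(2)]]
      comp_assoc[OF c s(3) s(1)] comp_assoc[OF c s(4) s(2)] by simp
  finally show ?thesis .
qed

text \<open>The pullback of \<open>f\<close> and \<open>p\<close> is the kernel of \<open>f \<circ> \<pi>\<^sub>1 - p \<circ> \<pi>\<^sub>2 : X \<oplus> P \<rightarrow> Y\<close>.\<close>

lemma pullback_exists:
  assumes f: "f \<in> hom C X Y" and p: "p \<in> hom C P Y"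
  obtains P' g q where "is_pullback C f X Y p P P' g q"
proof -
  obtain S i1 i2 p1 p2 where S: "is_biproduct C X P S i1 i2 p1 p2"
    using biproduct_exists hom_obD f p by metis
  have s: "i1 \<in> hom C X S" "i2 \<in> hom C P S" "p1 \<in> hom C S X" "p2 \<in> hom C S P"
    using S unfolding is_biproduct_def by auto
  have fp: "cmp C f p1 \<in> hom C S Y" "cmp C p p2 \<in> hom C S Y" using s f p by blast+
  define d where "d = msub C (cmp C f p1) (cmp C p p2)"
  have d: "d \<in> hom C S Y" unfolding d_def using fp by blast
  obtain K k where K: "is_kernel C d S Y K k" using kernel_exists[OF d] by blast
  note k = kernelD[OF K]
  define g q where "g = cmp C p1 k" and "q = cmp C p2 k"
  have gq: "g \<in> hom C K X" "q \<in> hom C K P" unfolding g_def q_def using k s by blast+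
  have d_comp: "cmp C d c = msub C (cmp C f (cmp C p1 c)) (cmp C p (cmp C p2 c))"
    if "c \<in> hom C W S" for c W
    unfolding d_def using comp_diff_left[OF that fp] comp_assoc[OF that s(3) f]
      comp_assoc[OF that s(4) p] by simp
  have square: "cmp C f g = cmp C p q"
    using diff_eq_zeroD comp_hom gq f p d_comp[OF k(1)] k(3) unfolding g_def q_def by metis
  have universal: "\<exists>!v. v \<in> hom C W K \<and> cmp C g v = a \<and> cmp C q v = b"
    if ab: "a \<in> hom C W X" "b \<in> hom C W P" "cmp C f a = cmp C p b" for W a b
  proof -
    define m where "m = madd C (cmp C i1 a) (cmp C i2 b)"
    have m: "m \<in> hom C W S" unfolding m_def using s ab by blast
    have pm: "cmp C p1 m = a" "cmp C p2 m = b" unfolding m_def using biproduct_proj[OF S ab(1,2)] by auto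
    have "cmp C d m = mzero C W Y" using d_comp[OF m] pm ab(3) diff_self comp_hom[OF ab(2) p] by simp
    then obtain v where v: "v \<in> hom C W K" "cmp C k v = m" using kernel_lift[OF K m] by blast
    have gv: "cmp C g v = a" "cmp C q v = b" unfolding g_def q_def
      using comp_assoc[OF v(1) k(1) s(3)] comp_assoc[OF v(1) k(1) s(4)] v(2) pm by simp_all
    show ?thesis
    proof (rule ex1I[of _ v])
      show "v \<in> hom C W K \<and> cmp C g v = a \<and> cmp C q v = b" using v gv by blast
    next
      fix v' assume v': "v' \<in> hom C W K \<and> cmp C g v' = a \<and> cmp C q v' = b"
      have "cmp C k v' = m"
        using biproduct_expand[OF S comp_hom[OF _ k(1)], of v' W] v'
          comp_assoc[of v' W K k S p1 X] comp_assoc[of v' W K k S p2 P] k s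
        unfolding m_def g_def q_def by simp
      then show "v' = v" using kernel_cancel[OF K] v v' by metis
    qed
  qed
  have "is_pullback C f X Y p P K g q"
    unfolding is_pullback_def using f p gq square universal by blast
  then show ?thesis using that by blast
qed

section \<open>Morphisms factoring through \<open>T\<close>\<close>

abbreviation ft where "ft h W V \<equiv> factors_through C T h W V"

lemma factors_throughI: "Q \<in> T \<Longrightarrow> a \<in> hom C W Q \<Longrightarrow> b \<in> hom C Q V \<Longrightarrow> ft (cmp C b a) W V"
  unfolding factors_through_def by blast

lemma factors_throughE:
  assumes "ft h W V"
  obtains Q a b where "Q \<in> T" "a \<in> hom C W Q" "b \<in> hom C Q V" "h = cmp C b a"
  using assms unfolding factors_through_def by blast

lemma ft_from_subcat: assumes "W \<in> T" "h \<in> hom C W V" shows "ft h W V"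
  using factors_throughI[OF assms(1) ident_hom[OF subcat_ob[OF assms(1)]] assms(2)] assms(2) by simp

lemma ft_to_subcat: assumes "V \<in> T" "h \<in> hom C W V" shows "ft h W V"
  using factors_throughI[OF assms(1) assms(2) ident_hom[OF subcat_ob[OF assms(1)]]] assms(2) by simp

lemma ft_comp_left: assumes "ft h W V" "a \<in> hom C V V'" shows "ft (cmp C a h) W V'"
proof -
  obtain Q x y where Q: "Q \<in> T" "x \<in> hom C W Q" "y \<in> hom C Q V" "h = cmp C y x"
    using assms(1) by (rule factors_throughE)
  have "cmp C a h = cmp C (cmp C a y) x" using Q(4) comp_assoc[OF Q(2,3) assms(2)] by simp
  then show ?thesis using factors_throughI[OF Q(1,2) comp_hom[OF Q(3) assms(2)]] by simp
qed

lemma ft_comp_right: assumes "ft h W V" "a \<in> hom C W' W" shows "ft (cmp C h a) W' V"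
proof -
  obtain Q x y where Q: "Q \<in> T" "x \<in> hom C W Q" "y \<in> hom C Q V" "h = cmp C y x"
    using assms(1) by (rule factors_throughE)
  have "cmp C h a = cmp C y (cmp C x a)" using Q(4) comp_assoc[OF assms(2) Q(2,3)] by simp
  then show ?thesis using factors_throughI[OF Q(1) comp_hom[OF assms(2) Q(2)] Q(3)] by simp
qed

lemma ft_neg: assumes "ft h W V" shows "ft (mneg C h) W V"
proof -
  obtain Q x y where Q: "Q \<in> T" "x \<in> hom C W Q" "y \<in> hom C Q V" "h = cmp C y x"
    using assms(1) by (rule factors_throughE)
  have "mneg C h = cmp C (mneg C y) x" using comp_neg_left[OF Q(2,3)] Q(4) by simp
  then show ?thesis using factors_throughI[OF Q(1,2) neg_hom[OF Q(3)]] by simp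
qed

lemma ft_zero: assumes "W \<in> ob C" "V \<in> ob C" shows "ft (mzero C W V) W V"
proof -
  obtain Z where Z: "Z \<in> T" "is_zero_obj C Z" by (rule subcat_zero_obj)
  have "Z \<in> ob C" using Z(1) by (rule subcat_ob)
  then show ?thesis
    using factors_throughI[OF Z(1) zero_hom zero_hom] comp_zero_left[OF zero_hom] assms by metis
qed

lemma ft_via_zero_obj:
  assumes Z: "is_zero_obj C Z" and a: "a \<in> hom C W Z" and b: "b \<in> hom C Z V"
  shows "ft (cmp C b a) W V"
proof -
  have "a = mzero C W Z"
    using Z a zero_hom_of[OF a] hom_obD(1)[OF a] unfolding is_zero_obj_def by blast
  then show ?thesis using comp_zero_right[OF b hom_obD(1)[OF a]] ft_zero hom_obD a b by metis
qed

lemma ft_add: assumes "ft h W V" "ft h' W V" shows "ft (madd C h h') W V"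
proof -
  obtain P1 a1 b1 where P1: "P1 \<in> T" "a1 \<in> hom C W P1" "b1 \<in> hom C P1 V" "h = cmp C b1 a1"
    using assms(1) by (rule factors_throughE)
  obtain P2 a2 b2 where P2: "P2 \<in> T" "a2 \<in> hom C W P2" "b2 \<in> hom C P2 V" "h' = cmp C b2 a2"
    using assms(2) by (rule factors_throughE)
  obtain S i1 i2 p1 p2 where S: "is_biproduct C P1 P2 S i1 i2 p1 p2"
    using biproduct_exists subcat_ob P1(1) P2(1) by metis
  have s: "i1 \<in> hom C P1 S" "i2 \<in> hom C P2 S" "p1 \<in> hom C S P1" "p2 \<in> hom C S P2"
    using S unfolding is_biproduct_def by auto
  define x where "x = madd C (cmp C i1 a1) (cmp C i2 a2)"
  define y where "y = madd C (cmp C b1 p1) (cmp C b2 p2)"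
  have x: "x \<in> hom C W S" unfolding x_def using s P1 P2 by blast
  have y: "y \<in> hom C S V" unfolding y_def using s P1 P2 by blast
  have "cmp C y x = madd C (cmp C b1 (cmp C p1 x)) (cmp C b2 (cmp C p2 x))"
    unfolding y_def using comp_distrib_right[OF x comp_hom[OF s(3) P1(3)] comp_hom[OF s(4) P2(3)]]
      comp_assoc[OF x s(3) P1(3)] comp_assoc[OF x s(4) P2(3)] by simp
  also have "\<dots> = madd C h h'"
    using biproduct_proj[OF S P1(2) P2(2)] P1(4) P2(4) unfolding x_def by simp
  finally show ?thesis using factors_throughI[OF subcat_biproduct[OF P1(1) P2(1) S] x y] by simp
qed

lemma ft_diff: "ft h W V \<Longrightarrow> ft h' W V \<Longrightarrow> ft (msub C h h') W V"
  unfolding msub_def using ft_add ft_neg by blast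

lemma precover_lift:
  assumes "precover C T p P Y" "W \<in> T" "h \<in> hom C W Y"
  obtains c where "c \<in> hom C W P" "cmp C p c = h"
  using assms unfolding precover_def by blast

lemma ft_precover_lift:
  assumes "ft h W Y" and pc: "precover C T p P Y"
  obtains c where "c \<in> hom C W P" "h = cmp C p c"
proof -
  obtain Q x y where Q: "Q \<in> T" "x \<in> hom C W Q" "y \<in> hom C Q Y" "h = cmp C y x"
    using assms(1) by (rule factors_throughE)
  obtain v where v: "v \<in> hom C Q P" "cmp C p v = y" using precover_lift[OF pc Q(1,3)] .
  have "p \<in> hom C P Y" using pc unfolding precover_def by blast
  then have "h = cmp C p (cmp C v x)" using Q(4) v(2) comp_assoc[OF Q(2) v(1)] by simp
  then show ?thesis using that comp_hom[OF Q(2) v(1)] by blast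
qed

lemma retraction_biproduct:
  assumes a: "a \<in> hom C P Q" and b: "b \<in> hom C Q P" and ba: "cmp C b a = ident C P"
  obtains K k r where "is_biproduct C P K Q a k b r"
proof -
  have ob: "P \<in> ob C" "Q \<in> ob C" using a hom_obD by blast+
  obtain K k where K: "is_kernel C b Q P K k" using kernel_exists[OF b] .
  note k = kernelD[OF K]
  have obK: "K \<in> ob C" using k(1) hom_obD by blast
  have ab: "cmp C a b \<in> hom C Q Q" using a b by blast
  define e where "e = msub C (ident C Q) (cmp C a b)"
  have e: "e \<in> hom C Q Q" unfolding e_def using ab ob by blast
  have "cmp C b e = msub C b (cmp C (cmp C b a) b)"
    unfolding e_def using comp_diff_right[OF ident_hom[OF ob(2)] ab b] comp_assoc[OF b a b] b by simp
  also have "\<dots> = mzero C Q P" using ba b diff_self by simp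
  finally obtain r where r: "r \<in> hom C Q K" "cmp C k r = e" using kernel_lift[OF K e] by blast
  have "cmp C k (cmp C r k) = cmp C e k" using comp_assoc[OF k(1) r(1) k(1)] r(2) by simp
  also have "\<dots> = msub C k (cmp C a (cmp C b k))"
    unfolding e_def using comp_diff_left[OF k(1) ident_hom[OF ob(2)] ab] comp_assoc[OF k(1) b a] k(1)
    by simp
  also have "\<dots> = cmp C k (ident C K)"
    using k comp_zero_right[OF a obK] diff_zero by simp
  finally have rk: "cmp C r k = ident C K"
    using kernel_cancel[OF K] comp_hom[OF k(1) r(1)] ident_hom[OF obK] by blast
  have "cmp C k (cmp C r a) = cmp C e a" using comp_assoc[OF a r(1) k(1)] r(2) by simp
  also have "\<dots> = msub C a (cmp C a (cmp C b a))"
    unfolding e_def using comp_diff_left[OF a ident_hom[OF ob(2)] ab] comp_assoc[OF a b a] a by simp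
  also have "\<dots> = cmp C k (mzero C P K)"
    using ba a diff_self comp_zero_right[OF k(1) ob(1)] by simp
  finally have ra: "cmp C r a = mzero C P K"
    using kernel_cancel[OF K] comp_hom[OF a r(1)] zero_hom[OF ob(1) obK] by blast
  have "madd C (cmp C a b) (cmp C k r) = ident C Q"
    using r(2) diff_add_cancel[OF ident_hom[OF ob(2)] ab] add_commute[OF ab e] unfolding e_def
    by simp
  then have "is_biproduct C P K Q a k b r"
    unfolding is_biproduct_def using a b k r ba rk ra by simp
  then show ?thesis using that by blast
qed

lemma subcat_if_ident_ft:
  assumes "ft (ident C P) P P" shows "P \<in> T"
proof -
  obtain Q a b where Q: "Q \<in> T" "a \<in> hom C P Q" "b \<in> hom C Q P" "ident C P = cmp C b a"
    using assms by (rule factors_throughE)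
  obtain K k r where "is_biproduct C P K Q a k b r"
    using retraction_biproduct[OF Q(2,3) Q(4)[symmetric]] .
  then show ?thesis using subcat_summand[OF Q(1)] by blast
qed

lemma st_eq_ft: "st_eq C T X Y f g \<Longrightarrow> ft (msub C f g) X Y"
  unfolding st_eq_def by blast

lemma st_eq_refl: assumes "f \<in> hom C X Y" shows "st_eq C T X Y f f"
  unfolding st_eq_def using assms diff_self[OF assms] ft_zero[OF hom_obD[OF assms]] by simp

lemma st_eq_sym: assumes "st_eq C T X Y f g" shows "st_eq C T X Y g f"
proof -
  have h: "f \<in> hom C X Y" "g \<in> hom C X Y" "ft (msub C f g) X Y"
    using assms unfolding st_eq_def by auto
  show ?thesis unfolding st_eq_def using h ft_neg[OF h(3)] neg_diff[OF h(1,2)] by simp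
qed

lemma st_eq_trans: assumes "st_eq C T X Y f g" "st_eq C T X Y g h" shows "st_eq C T X Y f h"
proof -
  have a: "f \<in> hom C X Y" "g \<in> hom C X Y" "h \<in> hom C X Y" "ft (msub C f g) X Y"
    "ft (msub C g h) X Y"
    using assms unfolding st_eq_def by auto
  show ?thesis unfolding st_eq_def using a ft_add[OF a(4,5)] diff_add_diff[OF a(1,2,3)] by simp
qed

lemma st_eq_comp_left:
  assumes "st_eq C T X Y f g" "a \<in> hom C Y Y'" shows "st_eq C T X Y' (cmp C a f) (cmp C a g)"
proof -
  have h: "f \<in> hom C X Y" "g \<in> hom C X Y" "ft (msub C f g) X Y"
    using assms unfolding st_eq_def by auto
  show ?thesis unfolding st_eq_def
    using h assms(2) ft_comp_left[OF h(3) assms(2)] comp_diff_right[OF h(1,2) assms(2)] by auto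
qed

lemma st_eq_comp_right:
  assumes "st_eq C T X Y f g" "a \<in> hom C X' X" shows "st_eq C T X' Y (cmp C f a) (cmp C g a)"
proof -
  have h: "f \<in> hom C X Y" "g \<in> hom C X Y" "ft (msub C f g) X Y"
    using assms unfolding st_eq_def by auto
  show ?thesis unfolding st_eq_def
    using h assms(2) ft_comp_right[OF h(3) assms(2)] comp_diff_left[OF assms(2) h(1,2)] by auto
qed

lemma st_eq_from_subcat: "X \<in> T \<Longrightarrow> f \<in> hom C X Y \<Longrightarrow> g \<in> hom C X Y \<Longrightarrow> st_eq C T X Y f g"
  unfolding st_eq_def using ft_from_subcat by blast

lemma st_eq_to_subcat: "Y \<in> T \<Longrightarrow> f \<in> hom C X Y \<Longrightarrow> g \<in> hom C X Y \<Longrightarrow> st_eq C T X Y f g"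
  unfolding st_eq_def using ft_to_subcat by blast

lemma st_iso_ident:
  assumes "X \<in> ob C" shows "st_iso C T X X (ident C X)"
proof -
  have i: "ident C X \<in> hom C X X" using assms by blast
  then have "st_eq C T X X (cmp C (ident C X) (ident C X)) (ident C X)"
    using st_eq_refl[OF i] by simp
  then show ?thesis unfolding st_iso_def using i by blast
qed

lemma subcat_if_st_iso_zero_obj:
  assumes Z: "is_zero_obj C Z" and iso: "st_iso C T Z B \<phi>" shows "B \<in> T"
proof -
  obtain \<psi> where \<phi>: "\<phi> \<in> hom C Z B" and \<psi>: "\<psi> \<in> hom C B Z"
    and eq: "st_eq C T B B (cmp C \<phi> \<psi>) (ident C B)"
    using iso unfolding st_iso_def by blast
  have "ft (msub C (cmp C \<phi> \<psi>) (msub C (cmp C \<phi> \<psi>) (ident C B))) B B"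
    using ft_diff[OF ft_via_zero_obj[OF Z \<psi> \<phi>] st_eq_ft[OF eq]] .
  then have "ft (ident C B) B B"
    using diff_diff_cancel[OF comp_hom[OF \<psi> \<phi>] ident_hom[OF hom_obD(1)[OF \<psi>]]] by simp
  then show ?thesis by (rule subcat_if_ident_ft)
qed

section \<open>Pullbacks along precovers\<close>

lemma ft_if_st_eq: assumes "st_eq C T X Y f g" "ft f X Y" shows "ft g X Y"
proof -
  have "f \<in> hom C X Y" "g \<in> hom C X Y" using assms(1) unfolding st_eq_def by auto
  then show ?thesis using ft_diff[OF assms(2) st_eq_ft[OF assms(1)]] diff_diff_cancel by metis
qed

lemma st_eq_inverse_square:
  assumes \<phi>: "\<phi> \<in> hom C X X'" "\<phi>' \<in> hom C X' X" "st_eq C T X' X' (cmp C \<phi> \<phi>') (ident C X')"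
    and \<psi>: "\<psi> \<in> hom C Y Y'" "\<psi>' \<in> hom C Y' Y" "st_eq C T Y Y (cmp C \<psi>' \<psi>) (ident C Y)"
    and f: "f \<in> hom C X Y" "f' \<in> hom C X' Y'"
    and sq: "st_eq C T X Y' (cmp C \<psi> f) (cmp C f' \<phi>)"
  shows "st_eq C T X' Y (cmp C f \<phi>') (cmp C \<psi>' f')"
proof -
  have f\<phi>': "cmp C f \<phi>' \<in> hom C X' Y" using f \<phi> by blast
  have "st_eq C T X' Y (cmp C (ident C Y) (cmp C f \<phi>')) (cmp C (cmp C \<psi>' \<psi>) (cmp C f \<phi>'))"
    using st_eq_comp_right[OF st_eq_sym[OF \<psi>(3)] f\<phi>'] by simp
  moreover have "cmp C (cmp C \<psi>' \<psi>) (cmp C f \<phi>') = cmp C \<psi>' (cmp C (cmp C \<psi> f) \<phi>')"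
    using comp_assoc[OF f\<phi>' \<psi>(1,2)] comp_assoc[OF \<phi>(2) f(1) \<psi>(1)] by simp
  moreover have "st_eq C T X' Y (cmp C \<psi>' (cmp C (cmp C \<psi> f) \<phi>')) (cmp C \<psi>' (cmp C (cmp C f' \<phi>) \<phi>'))"
    using st_eq_comp_left[OF st_eq_comp_right[OF sq \<phi>(2)] \<psi>(2)] .
  moreover have "cmp C \<psi>' (cmp C (cmp C f' \<phi>) \<phi>') = cmp C (cmp C \<psi>' f') (cmp C \<phi> \<phi>')"
    using comp_assoc[OF \<phi>(2,1) f(2)] comp_assoc[OF comp_hom[OF \<phi>(2,1)] f(2) \<psi>(2)] by simp
  moreover have "st_eq C T X' Y (cmp C (cmp C \<psi>' f') (cmp C \<phi> \<phi>')) (cmp C \<psi>' f')"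
    using st_eq_comp_left[OF \<phi>(3) comp_hom[OF f(2) \<psi>(2)]] comp_hom[OF f(2) \<psi>(2)] by simp
  ultimately show ?thesis using f\<phi>' st_eq_trans by (metis comp_ident_left)
qed

lemma kernel_pullback_map:
  assumes PB: "is_pullback C f X Y p TY P g q"
  obtains Om k u where "is_kernel C p TY Y Om k"
    and "u \<in> hom C Om P" "cmp C g u = mzero C Om X" "cmp C q u = k"
proof -
  note h = pullbackD[OF PB]
  obtain Om k where K: "is_kernel C p TY Y Om k" using kernel_exists[OF h(2)] .
  note k = kernelD[OF K]
  have Om: "Om \<in> ob C" using k(1) hom_obD by blast
  have "cmp C f (mzero C Om X) = cmp C p k"
    using k(3) comp_zero_right[OF h(1) Om] by simp
  then obtain u where "u \<in> hom C Om P" "cmp C g u = mzero C Om X" "cmp C q u = k"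
    using pullback_lift[OF PB zero_hom[OF Om hom_obD(1)[OF h(1)]] k(1)] by blast
  then show ?thesis using that K by blast
qed

text \<open>The defect \<open>f' \<phi> - \<psi> f\<close> of the square equals \<open>p' s\<close>, and \<open>s g + a q\<close> is the second
  component of \<open>\<gamma>\<close>.\<close>

lemma pullback_map:
  assumes PB: "is_pullback C f X Y p TY P g q" and PB': "is_pullback C f' X' Y' p' TY' P' g' q'"
    and pc': "precover C T p' TY' Y'"
    and \<phi>: "\<phi> \<in> hom C X X'" and \<psi>: "\<psi> \<in> hom C Y Y'"
    and sq: "st_eq C T X Y' (cmp C \<psi> f) (cmp C f' \<phi>)"
    and a: "a \<in> hom C TY TY'" "cmp C p' a = cmp C \<psi> p"
    and w: "w \<in> hom C W P" "cmp C g w = mzero C W X"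
  obtains \<gamma> where "\<gamma> \<in> hom C P P'" "cmp C g' \<gamma> = cmp C \<phi> g"
    and "cmp C q' (cmp C \<gamma> w) = cmp C a (cmp C q w)"
proof -
  note h = pullbackD[OF PB] and h' = pullbackD[OF PB']
  obtain s where s: "s \<in> hom C X TY'" "msub C (cmp C f' \<phi>) (cmp C \<psi> f) = cmp C p' s"
    using ft_precover_lift[OF st_eq_ft[OF st_eq_sym[OF sq]] pc'] .
  define c where "c = madd C (cmp C s g) (cmp C a q)"
  have c: "c \<in> hom C P TY'" unfolding c_def using s h a by blast
  have f'\<phi>: "cmp C f' \<phi> \<in> hom C X Y'" "cmp C \<psi> f \<in> hom C X Y'" using \<phi> \<psi> h h' by blast+
  have "cmp C f' (cmp C \<phi> g) = cmp C (madd C (cmp C p' s) (cmp C \<psi> f)) g"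
    using comp_assoc[OF h(3) \<phi> h'(1)] diff_add_cancel[OF f'\<phi>] s(2) by simp
  also have "\<dots> = madd C (cmp C p' (cmp C s g)) (cmp C \<psi> (cmp C p q))"
    using comp_distrib_right[OF h(3) comp_hom[OF s(1) h'(2)] f'\<phi>(2)]
      comp_assoc[OF h(3) s(1) h'(2)] comp_assoc[OF h(3) h(1) \<psi>] h(5) by simp
  also have "\<dots> = cmp C p' c"
    unfolding c_def using comp_distrib_left[OF comp_hom[OF h(3) s(1)] comp_hom[OF h(4) a(1)] h'(2)]
      comp_assoc[OF h(4) h(2) \<psi>] comp_assoc[OF h(4) a(1) h'(2)] a(2) by simp
  finally obtain \<gamma> where \<gamma>: "\<gamma> \<in> hom C P P'" "cmp C g' \<gamma> = cmp C \<phi> g" "cmp C q' \<gamma> = c"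
    using pullback_lift[OF PB' comp_hom[OF h(3) \<phi>] c] by blast
  have "cmp C q' (cmp C \<gamma> w) = madd C (cmp C s (cmp C g w)) (cmp C a (cmp C q w))"
    using comp_assoc[OF w(1) \<gamma>(1) h'(4)] \<gamma>(3) comp_assoc[OF w(1) h(3) s(1)]
      comp_assoc[OF w(1) h(4) a(1)] comp_distrib_right[OF w(1) comp_hom[OF h(3) s(1)]
      comp_hom[OF h(4) a(1)]] unfolding c_def by simp
  also have "\<dots> = cmp C a (cmp C q w)"
    using w(2) comp_zero_right[OF s(1) hom_obD(1)[OF w(1)]] add_zero_left comp_hom h(4) a(1) w(1)
    by metis
  finally show ?thesis using that \<gamma>(1,2) by blast
qed

text \<open>Writing \<open>\<chi> - 1 = p s\<close>, the map \<open>a - 1 - s p\<close> is killed by \<open>p\<close>, hence equals \<open>k e\<close>; then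
  \<open>v - u = u e k\<close> factors through \<open>T\<^sub>Y\<close>.\<close>

lemma st_eq_kernel_map:
  assumes pc: "precover C T p TY Y" and K: "is_kernel C p TY Y Om k"
    and PB: "is_pullback C f X Y p TY P g q"
    and u: "u \<in> hom C Om P" "cmp C g u = mzero C Om X" "cmp C q u = k"
    and v: "v \<in> hom C Om P" "cmp C g v = mzero C Om X" "cmp C q v = cmp C a k"
    and a: "a \<in> hom C TY TY" "cmp C p a = cmp C \<chi> p" and \<chi>: "st_eq C T Y Y \<chi> (ident C Y)"
  shows "st_eq C T Om P v u"
proof -
  note h = pullbackD[OF PB] and k = kernelD[OF K]
  have TY: "TY \<in> T" using pc unfolding precover_def by blast
  have ob: "Om \<in> ob C" "TY \<in> ob C" "Y \<in> ob C" using k(1) h(2) hom_obD by blast+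
  have \<chi>_hom: "\<chi> \<in> hom C Y Y" using \<chi> unfolding st_eq_def by blast
  obtain s where s: "s \<in> hom C Y TY" "msub C \<chi> (ident C Y) = cmp C p s"
    using ft_precover_lift[OF st_eq_ft[OF \<chi>] pc] .
  have sp: "cmp C s p \<in> hom C TY TY" using s h by blast
  define E where "E = msub C (msub C a (ident C TY)) (cmp C s p)"
  have E: "E \<in> hom C TY TY" unfolding E_def using a sp ob by blast
  have \<chi>p: "cmp C \<chi> p \<in> hom C TY Y" using \<chi>_hom h by blast
  have "cmp C p (cmp C s p) = msub C (cmp C \<chi> p) p"
    using comp_assoc[OF h(2) s(1) h(2)] s(2)[symmetric]
      comp_diff_left[OF h(2) \<chi>_hom ident_hom[OF ob(3)]] h(2) by simp
  then have "cmp C p E = mzero C TY Y"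
    unfolding E_def using comp_diff_right[OF diff_hom[OF a(1) ident_hom[OF ob(2)]] sp h(2)]
      comp_diff_right[OF a(1) ident_hom[OF ob(2)] h(2)] a(2) h(2) diff_self[OF diff_hom[OF \<chi>p h(2)]]
    by simp
  then obtain e where e: "e \<in> hom C TY Om" "cmp C k e = E" using kernel_lift[OF K E] by blast
  have ek: "cmp C e k \<in> hom C Om Om" using e k by blast
  have "cmp C E k = msub C (msub C (cmp C a k) k) (mzero C Om TY)"
    unfolding E_def using comp_diff_left[OF k(1) diff_hom[OF a(1) ident_hom[OF ob(2)]] sp]
      comp_diff_left[OF k(1) a(1) ident_hom[OF ob(2)]] k comp_assoc[OF k(1) h(2) s(1)]
      comp_zero_right[OF s(1) ob(1)] by simp
  then have Ek: "cmp C E k = msub C (cmp C a k) k"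
    using diff_zero comp_hom k(1) a(1) by (metis diff_hom)
  have "cmp C q (msub C v u) = cmp C q (cmp C u (cmp C e k))"
    using comp_diff_right[OF v(1) u(1) h(4)] v(3) u(3) Ek e(2) comp_assoc[OF k(1) e(1) k(1)]
      comp_assoc[OF ek u(1) h(4)] by simp
  moreover have "cmp C g (msub C v u) = cmp C g (cmp C u (cmp C e k))"
    using comp_diff_right[OF v(1) u(1) h(3)] v(2) u(2) diff_self zero_hom[OF ob(1) hom_obD(1)[OF h(1)]]
      comp_assoc[OF ek u(1) h(3)] comp_zero_left[OF ek hom_obD(1)[OF h(1)]] by simp
  ultimately have "msub C v u = cmp C (cmp C u e) k"
    using pullback_cancel[OF PB diff_hom[OF v(1) u(1)] comp_hom[OF ek u(1)]]
      comp_assoc[OF k(1) e(1) u(1)] by simp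
  then show ?thesis
    unfolding st_eq_def using v(1) u(1) factors_throughI[OF TY k(1) comp_hom[OF e(1) u(1)]] by simp
qed

text \<open>Lifting along the precover turns a factorization of \<open>g\<close> through \<open>T\<close> into \<open>g = g s a\<close> with
  \<open>a : P \<rightarrow> Q \<in> T\<close>; then \<open>1 - s a\<close> is killed by \<open>g\<close>, so it factors through \<open>u\<close>.\<close>

lemma pullback_in_subcat_if_ft:
  assumes pc: "precover C T p TY Y" and K: "is_kernel C p TY Y Om k"
    and PB: "is_pullback C f X Y p TY P g q"
    and u: "u \<in> hom C Om P" "cmp C g u = mzero C Om X" "cmp C q u = k"
    and u_ft: "ft u Om P" and g_ft: "ft g P X"
  shows "P \<in> T"
proof -
  note h = pullbackD[OF PB]
  have P: "P \<in> ob C" using h(3) hom_obD by blast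
  obtain Q a c where Q: "Q \<in> T" "a \<in> hom C P Q" "c \<in> hom C Q X" "g = cmp C c a"
    using g_ft by (rule factors_throughE)
  obtain d where d: "d \<in> hom C Q TY" "cmp C p d = cmp C f c"
    using precover_lift[OF pc Q(1) comp_hom[OF Q(3) h(1)]] .
  obtain s where s: "s \<in> hom C Q P" "cmp C g s = c"
    using pullback_lift[OF PB Q(3) d(1) d(2)[symmetric]] by blast
  have sa: "cmp C s a \<in> hom C P P" using Q(2) s(1) by blast
  define m where "m = msub C (ident C P) (cmp C s a)"
  have m: "m \<in> hom C P P" unfolding m_def using sa P by blast
  have "cmp C g m = mzero C P X"
    unfolding m_def using comp_diff_right[OF ident_hom[OF P] sa h(3)] comp_assoc[OF Q(2) s(1) h(3)]
      s(2) Q(4) h(3) diff_self by simp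
  then obtain e where e: "e \<in> hom C P Om" "m = cmp C u e"
    using pullback_kernel_lift[OF PB K u m] by blast
  have "ft (madd C m (cmp C s a)) P P"
    using ft_add[OF ft_comp_right[OF u_ft e(1)] factors_throughI[OF Q(1,2) s(1)]] e(2) by simp
  then have "ft (ident C P) P P" unfolding m_def using diff_add_cancel[OF ident_hom[OF P] sa] by simp
  then show ?thesis by (rule subcat_if_ident_ft)
qed

text \<open>Comparison maps \<open>\<gamma> : P \<rightarrow> P'\<close> and \<open>\<delta> : P' \<rightarrow> P\<close> exist in both directions; as \<open>P' \<in> T\<close>,
  both \<open>\<delta> \<gamma> u\<close> and \<open>\<phi>' \<phi> g = g \<delta> \<gamma>\<close> factor through \<open>T\<close>, and they agree stably with \<open>u\<close> and \<open>g\<close>.\<close>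

lemma pullback_in_subcat_transfer:
  assumes pc: "precover C T p TY Y" and PB: "is_pullback C f X Y p TY P g q"
    and pc': "precover C T p' TY' Y'" and PB': "is_pullback C f' X' Y' p' TY' P' g' q'"
    and P': "P' \<in> T"
    and \<phi>: "st_iso C T X X' \<phi>" and \<psi>: "st_iso C T Y Y' \<psi>"
    and sq: "st_eq C T X Y' (cmp C \<psi> f) (cmp C f' \<phi>)"
  shows "P \<in> T"
proof -
  note h = pullbackD[OF PB] and h' = pullbackD[OF PB']
  have TY: "TY \<in> T" "TY' \<in> T" using pc pc' unfolding precover_def by blast+
  obtain \<phi>' where \<phi>': "\<phi> \<in> hom C X X'" "\<phi>' \<in> hom C X' X"
    "st_eq C T X X (cmp C \<phi>' \<phi>) (ident C X)" "st_eq C T X' X' (cmp C \<phi> \<phi>') (ident C X')"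
    using \<phi> unfolding st_iso_def by blast
  obtain \<psi>' where \<psi>': "\<psi> \<in> hom C Y Y'" "\<psi>' \<in> hom C Y' Y" "st_eq C T Y Y (cmp C \<psi>' \<psi>) (ident C Y)"
    using \<psi> unfolding st_iso_def by blast
  obtain Om k u where K: "is_kernel C p TY Y Om k"
    and u: "u \<in> hom C Om P" "cmp C g u = mzero C Om X" "cmp C q u = k"
    using kernel_pullback_map[OF PB] .
  have Om: "Om \<in> ob C" using u(1) hom_obD by blast
  have k: "k \<in> hom C Om TY" using kernelD[OF K] by blast
  obtain a1 where a1: "a1 \<in> hom C TY TY'" "cmp C p' a1 = cmp C \<psi> p"
    using precover_lift[OF pc' TY(1) comp_hom[OF h(2) \<psi>'(1)]] .
  obtain \<gamma> where \<gamma>: "\<gamma> \<in> hom C P P'" "cmp C g' \<gamma> = cmp C \<phi> g"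
    "cmp C q' (cmp C \<gamma> u) = cmp C a1 k"
    using pullback_map[OF PB PB' pc' \<phi>'(1) \<psi>'(1) sq a1 u(1,2)] u(3) by blast
  have \<gamma>u: "cmp C \<gamma> u \<in> hom C Om P'" "cmp C g' (cmp C \<gamma> u) = mzero C Om X'"
    using comp_hom[OF u(1) \<gamma>(1)] comp_assoc[OF u(1) \<gamma>(1) h'(3)] \<gamma>(2) comp_assoc[OF u(1) h(3) \<phi>'(1)]
      u(2) comp_zero_right[OF \<phi>'(1) Om] by simp_all
  obtain a2 where a2: "a2 \<in> hom C TY' TY" "cmp C p a2 = cmp C \<psi>' p'"
    using precover_lift[OF pc TY(2) comp_hom[OF h'(2) \<psi>'(2)]] .
  have sq': "st_eq C T X' Y (cmp C \<psi>' f') (cmp C f \<phi>')"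
    using st_eq_sym[OF st_eq_inverse_square[OF \<phi>'(1,2,4) \<psi>' h(1) h'(1) sq]] .
  obtain \<delta> where \<delta>: "\<delta> \<in> hom C P' P" "cmp C g \<delta> = cmp C \<phi>' g'"
    "cmp C q (cmp C \<delta> (cmp C \<gamma> u)) = cmp C a2 (cmp C a1 k)"
    using pullback_map[OF PB' PB pc \<phi>'(2) \<psi>'(2) sq' a2 \<gamma>u] \<gamma>(3) by metis
  define v where "v = cmp C \<delta> (cmp C \<gamma> u)"
  have v: "v \<in> hom C Om P" "cmp C g v = mzero C Om X" "cmp C q v = cmp C (cmp C a2 a1) k"
    unfolding v_def using comp_hom[OF \<gamma>u(1) \<delta>(1)] comp_assoc[OF \<gamma>u(1) \<delta>(1) h(3)] \<delta>(2)
      comp_assoc[OF \<gamma>u(1) h'(3) \<phi>'(2)] \<gamma>u(2) comp_zero_right[OF \<phi>'(2) Om] \<delta>(3)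
      comp_assoc[OF k a1(1) a2(1)] by simp_all
  have "cmp C p (cmp C a2 a1) = cmp C (cmp C \<psi>' \<psi>) p"
    using comp_assoc[OF a1(1) a2(1) h(2)] a2(2) comp_assoc[OF a1(1) h'(2) \<psi>'(2)] a1(2)
      comp_assoc[OF h(2) \<psi>'(1,2)] by simp
  then have "st_eq C T Om P v u"
    using st_eq_kernel_map[OF pc K PB u v comp_hom[OF a1(1) a2(1)] _ \<psi>'(3)] by blast
  moreover have "ft v Om P"
    unfolding v_def using ft_comp_left[OF ft_to_subcat[OF P' \<gamma>u(1)] \<delta>(1)] .
  ultimately have u_ft: "ft u Om P" by (rule ft_if_st_eq)
  have "cmp C (cmp C \<phi>' g') \<gamma> = cmp C (cmp C \<phi>' \<phi>) g"
    using comp_assoc[OF \<gamma>(1) h'(3) \<phi>'(2)] \<gamma>(2) comp_assoc[OF h(3) \<phi>'(1,2)] by simp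
  then have "ft (cmp C (cmp C \<phi>' \<phi>) g) P X"
    using ft_comp_left[OF ft_to_subcat[OF P' \<gamma>(1)] comp_hom[OF h'(3) \<phi>'(2)]] by simp
  moreover have "st_eq C T P X (cmp C (cmp C \<phi>' \<phi>) g) g"
    using st_eq_comp_right[OF \<phi>'(3) h(3)] h(3) by simp
  ultimately have g_ft: "ft g P X" by (rule ft_if_st_eq[rotated])
  show ?thesis using pullback_in_subcat_if_ft[OF pc K PB u u_ft g_ft] .
qed

text \<open>With \<open>P \<in> T\<close>, the zero map \<open>0 \<rightarrow> P\<close> is a stable isomorphism, so the identity maps on
  \<open>\<Omega> Y\<close>, \<open>X\<close>, \<open>Y\<close> together with it identify \<open>\<Omega> Y \<rightarrow> 0 \<rightarrow> X \<rightarrow> Y\<close> with the standard triangle of \<open>f\<close>.\<close>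

lemma strong_mono_if_pullback_in_subcat:
  assumes pc: "precover C T p TY Y" and PB: "is_pullback C f X Y p TY P g q" and P: "P \<in> T"
  shows "strong_mono C T f X Y"
proof -
  note h = pullbackD[OF PB]
  have ob: "X \<in> ob C" "Y \<in> ob C" "P \<in> ob C" using h hom_obD by blast+
  obtain Om k u where K: "is_kernel C p TY Y Om k"
    and u: "u \<in> hom C Om P" "cmp C g u = mzero C Om X" "cmp C q u = k"
    using kernel_pullback_map[OF PB] .
  have Om: "Om \<in> ob C" using u(1) hom_obD by blast
  obtain Z where Z: "Z \<in> T" "is_zero_obj C Z" by (rule subcat_zero_obj)
  have obZ: "Z \<in> ob C" using Z(1) by (rule subcat_ob)
  have z: "mzero C Om Z \<in> hom C Om Z" "mzero C Z X \<in> hom C Z X"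
    "mzero C Z P \<in> hom C Z P" "mzero C P Z \<in> hom C P Z"
    using Om obZ ob by blast+
  have std: "std_left_triangle C T Om P X Y u g f"
    unfolding std_left_triangle_def using pc K PB u by blast
  have "st_eq C T Z Z (cmp C (mzero C P Z) (mzero C Z P)) (ident C Z)"
    using st_eq_from_subcat[OF Z(1)] z(3,4) ident_hom[OF obZ] by blast
  moreover have "st_eq C T P P (cmp C (mzero C Z P) (mzero C P Z)) (ident C P)"
    using st_eq_from_subcat[OF P] z(3,4) ident_hom[OF ob(3)] by blast
  ultimately have "st_iso C T Z P (mzero C Z P)"
    unfolding st_iso_def using z(3,4) by blast
  moreover have "st_eq C T Om P (cmp C (mzero C Z P) (mzero C Om Z)) (cmp C u (ident C Om))"
    using st_eq_to_subcat[OF P] comp_hom[OF z(1,3)] comp_hom[OF ident_hom[OF Om] u(1)] by blast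
  moreover have "st_eq C T Z X (cmp C (ident C X) (mzero C Z X)) (cmp C g (mzero C Z P))"
    using st_eq_from_subcat[OF Z(1)] comp_hom[OF z(2) ident_hom[OF ob(1)]] comp_hom[OF z(3) h(3)]
    by blast
  moreover have "st_eq C T X Y (cmp C (ident C Y) f) (cmp C f (ident C X))"
    using st_eq_refl[OF h(1)] h(1) by simp
  ultimately have "st_diag_iso C T Om Z X Y (mzero C Om Z) (mzero C Z X) f Om P X Y u g f"
    unfolding st_diag_iso_def
    using z(1,2) h(1,3) u(1) st_iso_ident[OF Om] st_iso_ident[OF ob(1)] st_iso_ident[OF ob(2)]
    by blast
  then have "left_triangle C T Om Z X Y (mzero C Om Z) (mzero C Z X) f"
    unfolding left_triangle_def using std by blast
  then show ?thesis unfolding strong_mono_def using h(1) pc K Z(2) by blast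
qed

lemma pullback_in_subcat_if_strong_mono:
  assumes sm: "strong_mono C T f X Y"
    and pc: "precover C T p TY Y" and PB: "is_pullback C f X Y p TY P g q"
  shows "P \<in> T"
proof -
  obtain Om Z where Z: "is_zero_obj C Z"
    and "left_triangle C T Om Z X Y (mzero C Om Z) (mzero C Z X) f"
    using sm unfolding strong_mono_def by blast
  then obtain B1 B2 B3 B4 b1 b2 b3 where std: "std_left_triangle C T B1 B2 B3 B4 b1 b2 b3"
    and iso: "st_diag_iso C T Om Z X Y (mzero C Om Z) (mzero C Z X) f B1 B2 B3 B4 b1 b2 b3"
    unfolding left_triangle_def by blast
  obtain TY' p' q' where pc': "precover C T p' TY' B4"
    and PB': "is_pullback C b3 B3 B4 p' TY' B2 b2 q'"
    using std unfolding std_left_triangle_def by blast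
  obtain \<phi>2 \<phi>3 \<phi>4 where "st_iso C T Z B2 \<phi>2" "st_iso C T X B3 \<phi>3" "st_iso C T Y B4 \<phi>4"
    and "st_eq C T X B4 (cmp C \<phi>4 f) (cmp C b3 \<phi>3)"
    using iso unfolding st_diag_iso_def by blast
  then show ?thesis
    using pullback_in_subcat_transfer[OF pc PB pc' PB'] subcat_if_st_iso_zero_obj[OF Z] by blast
qed

lemma precover_if_pullback_in_subcat:
  assumes pc: "precover C T p TY Y" and PB: "is_pullback C f X Y p TY P g q" and P: "P \<in> T"
  shows "precover C T g P X"
proof -
  note h = pullbackD[OF PB]
  have "\<exists>v. v \<in> hom C W P \<and> cmp C g v = a" if W: "W \<in> T" "a \<in> hom C W X" for W a
  proof -
    obtain c where "c \<in> hom C W TY" "cmp C p c = cmp C f a"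
      using precover_lift[OF pc W(1) comp_hom[OF W(2) h(1)]] .
    then show ?thesis using pullback_lift[OF PB W(2)] by metis
  qed
  then show ?thesis unfolding precover_def using P h(3) by blast
qed

end

theorem proposition2p2:
  fixes C :: "('o, 'm, 'z) acat_scheme" and T :: "'o set"
    and f :: 'm and X Y :: 'o
  assumes "abelian C"
    and "additive_subcat C T"
    and "contravariantly_finite C T"
    and "f \<in> hom C X Y"
  shows "(strong_mono C T f X Y \<longleftrightarrow>
            (\<forall>TY p P g q. precover C T p TY Y \<and> is_pullback C f X Y p TY P g q
                \<longrightarrow> precover C T g P X)) \<and>
         (strong_mono C T f X Y \<longleftrightarrow>
            (\<exists>TY p P g q. precover C T p TY Y \<and> is_pullback C f X Y p TY P g q
                \<and> precover C T g P X)) \<and>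
         (strong_mono C T f X Y \<longleftrightarrow>
            (\<forall>TY p P g q. precover C T p TY Y \<and> is_pullback C f X Y p TY P g q
                \<longrightarrow> P \<in> T)) \<and>
         (strong_mono C T f X Y \<longleftrightarrow>
            (\<exists>TY p P g q. precover C T p TY Y \<and> is_pullback C f X Y p TY P g q
                \<and> P \<in> T))"
proof -
  have "preadditive C" using assms(1) unfolding abelian_def additive_def by (elim conjE)
  then interpret abelian_with_subcat C T
    using assms(1,2) by unfold_locales
  have in_T_if_strong_mono: "P \<in> T" if "strong_mono C T f X Y" "precover C T p TY Y"
    "is_pullback C f X Y p TY P g q" for TY p P g q
    using pullback_in_subcat_if_strong_mono that .
  have precover_if_strong_mono: "precover C T g P X" if "strong_mono C T f X Y" "precover C T p TY Y"
    "is_pullback C f X Y p TY P g q" for TY p P g q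
    using precover_if_pullback_in_subcat that(2,3) in_T_if_strong_mono[OF that] .
  have strong_mono_if_in_T: "strong_mono C T f X Y" if "precover C T p TY Y"
    "is_pullback C f X Y p TY P g q" "P \<in> T" for TY p P g q
    using strong_mono_if_pullback_in_subcat that .
  have in_T_if_precover: "P \<in> T" if "precover C T g P X" for g P
    using that unfolding precover_def by (elim conjE)
  obtain TY p where pc: "precover C T p TY Y"
    using assms(3) hom_obD(2)[OF assms(4)] unfolding contravariantly_finite_def by blast
  then have "p \<in> hom C TY Y" unfolding precover_def by (elim conjE)
  then obtain P g q where pb: "is_pullback C f X Y p TY P g q"
    using pullback_exists[OF assms(4)] by blast
  show ?thesis
    using pc pb in_T_if_strong_mono precover_if_strong_mono strong_mono_if_in_T in_T_if_precover
    by (intro conjI iffI) (blast | meson)+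
qed

end
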